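(* Let $G$ and $H$ be graphs and $d\ge 0$ such that every vertex $v\in V(H)$ has degree at most $d$ in $H$ and degree at most $d$ in $G$. If there is a collection $\mathcal{F}$ of at least $4d+1$ linear forests covering the edges of $G$, then there is a collection of $|\mathcal{F}|$ linear forests covering the edges of $G\cup H$.
   Context: A linear forest is a graph which is a vertex-disjoint union of paths. A collection of graphs covers the edges of a graph if every edge lies in at least one graph of the collection. *)

theory Defs
  imports Main
begin

type_synonym 'a graph = "'a set \<times> 'a set set"

definition verts :: "'a graph \<Rightarrow> 'a set" where "verts G = fst G"
definition edges :: "'a graph \<Rightarrow> 'a set set" where "edges G = snd G"

definition graph :: "'a graph \<Rightarrow> bool" where
  "graph G \<longleftrightarrow> finite (verts G) \<and>
     (\<forall>e\<in>edges G. \<exists>u w. u \<noteq> w \<and> e = {u, w} \<and> u \<in> verts G \<and> w \<in> verts G)"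

definition degree :: "'a graph \<Rightarrow> 'a \<Rightarrow> nat" where
  "degree G v = card {e \<in> edges G. v \<in> e}"

definition graph_union :: "'a graph \<Rightarrow> 'a graph \<Rightarrow> 'a graph" where
  "graph_union G H = (verts G \<union> verts H, edges G \<union> edges H)"

definition path_edges :: "'a list \<Rightarrow> 'a set set" where
  "path_edges p = {{p ! i, p ! Suc i} | i. Suc i < length p}"

definition linear_forest :: "'a graph \<Rightarrow> bool" where
  "linear_forest F \<longleftrightarrow> graph F \<and>
     (\<exists>P :: 'a list set.
        (\<forall>p\<in>P. p \<noteq> [] \<and> distinct p) \<and>
        (\<forall>p\<in>P. \<forall>q\<in>P. p \<noteq> q \<longrightarrow> set p \<inter> set q = {}) \<and>
        verts F = (\<Union>p\<in>P. set p) \<and>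
        edges F = (\<Union>p\<in>P. path_edges p))"

definition covers_edges :: "nat \<Rightarrow> (nat \<Rightarrow> 'a graph) \<Rightarrow> 'a graph \<Rightarrow> bool" where
  "covers_edges k F G \<longleftrightarrow> (\<forall>e\<in>edges G. \<exists>i<k. e \<in> edges (F i))"

end

theory Submission
  imports Defs "HOL-Library.Disjoint_Sets"
begin

(* First restrict the k forests to E(G) and make them pairwise edge-disjoint (a subgraph of a
   linear forest is a linear forest). Then add the edges uv of H one at a time. Since the forests
   are edge-disjoint, each forest with an edge at u or v owns one of the at most
   deg_G u + deg_G v + deg_H u + deg_H v <= 4d < k edges of G \<union> H at u or v; so some forest has
   neither u nor v on an edge, and uv can be added to it as a new path component. *)

lemma verts_pair [simp]: "verts (V, E) = V"
  and edges_pair [simp]: "edges (V, E) = E"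
  by (simp_all add: verts_def edges_def)

lemma graph_finite_edges: "graph G \<Longrightarrow> finite (edges G)"
proof -
  assume "graph G"
  then have "edges G \<subseteq> Pow (verts G)" "finite (verts G)"
    unfolding graph_def by auto
  then show ?thesis
    by (simp add: finite_subset)
qed

lemma path_edges_Nil [simp]: "path_edges [] = {}"
  and path_edges_singleton [simp]: "path_edges [x] = {}"
  by (simp_all add: path_edges_def)

lemma path_edges_conv_image: "path_edges p = (\<lambda>i. {p ! i, p ! Suc i}) ` {..< length p - 1}"
  unfolding path_edges_def by (auto simp: less_diff_conv)

lemma path_edges_Cons_Cons [simp]:
  "path_edges (x # y # xs) = insert {x, y} (path_edges (y # xs))"
  unfolding path_edges_conv_image by (simp add: lessThan_Suc_eq_insert_0 image_image)

lemma path_edges_subset_set: "e \<in> path_edges p \<Longrightarrow> e \<subseteq> set p"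
  unfolding path_edges_def by auto

lemma path_edges_append:
  "xs \<noteq> [] \<Longrightarrow> ys \<noteq> [] \<Longrightarrow>
    path_edges (xs @ ys) = path_edges xs \<union> insert {last xs, hd ys} (path_edges ys)"
proof (induction xs rule: induct_list012)
  case (2 x)
  then show ?case by (cases ys) auto
next
  case (3 x y zs)
  then show ?case by auto
qed simp

lemma path_edges_split:
  "e \<in> path_edges p \<Longrightarrow> \<exists>xs ys. p = xs @ ys \<and> xs \<noteq> [] \<and> ys \<noteq> [] \<and> e = {last xs, hd ys}"
proof (induction p rule: induct_list012)
  case (3 x y zs)
  show ?case
  proof (cases "e = {x, y}")
    case True
    then show ?thesis by (intro exI[of _ "[x]"] exI[of _ "y # zs"]) simp
  next
    case False
    with "3.prems" obtain xs ys where "y # zs = xs @ ys" "xs \<noteq> []" "ys \<noteq> []" "e = {last xs, hd ys}"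
      using "3.IH"(2) by auto
    then show ?thesis by (intro exI[of _ "x # xs"] exI[of _ ys]) simp
  qed
qed simp_all

lemma path_edges_isolated_vertex:
  "u \<in> set p \<Longrightarrow> \<forall>e\<in>path_edges p. u \<notin> e \<Longrightarrow> p = [u]"
  by (induction p rule: induct_list012) auto

lemma path_edges_doubleton:
  "distinct p \<Longrightarrow> e \<in> path_edges p \<Longrightarrow> \<exists>a b. a \<noteq> b \<and> e = {a, b} \<and> a \<in> set p \<and> b \<in> set p"
  by (induction p rule: induct_list012) auto

definition disjoint_paths :: "'a list set \<Rightarrow> bool" where
  "disjoint_paths P \<longleftrightarrow> (\<forall>p\<in>P. p \<noteq> [] \<and> distinct p) \<and> pairwise (\<lambda>p q. set p \<inter> set q = {}) P"

lemma linear_forestE: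
  assumes "linear_forest F"
  obtains P where "disjoint_paths P" "verts F = (\<Union>p\<in>P. set p)" "edges F = (\<Union>p\<in>P. path_edges p)"
  using assms unfolding linear_forest_def
  by (elim conjE exE) (intro that; simp add: disjoint_paths_def pairwise_def)

lemma linear_forestI:
  assumes "finite V" "disjoint_paths P" "V = (\<Union>p\<in>P. set p)" "E = (\<Union>p\<in>P. path_edges p)"
  shows "linear_forest (V, E)"
proof -
  have "\<exists>a b. a \<noteq> b \<and> e = {a, b} \<and> a \<in> V \<and> b \<in> V" if e: "e \<in> E" for e
  proof -
    obtain p where p: "p \<in> P" "e \<in> path_edges p"
      using e assms(4) by blast
    moreover have "distinct p"
      using p(1) assms(2) unfolding disjoint_paths_def by blast
    ultimately obtain a b where "a \<noteq> b" "e = {a, b}" "a \<in> set p" "b \<in> set p"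
      using path_edges_doubleton by metis
    then show ?thesis
      using p(1) assms(3) by blast
  qed
  then have "graph (V, E)"
    using assms(1) unfolding graph_def by simp
  moreover have "(\<forall>p\<in>P. p \<noteq> [] \<and> distinct p) \<and> (\<forall>p\<in>P. \<forall>q\<in>P. p \<noteq> q \<longrightarrow> set p \<inter> set q = {})"
    using assms(2) unfolding disjoint_paths_def pairwise_def by blast
  ultimately show ?thesis
    unfolding linear_forest_def verts_pair edges_pair using assms(3,4) by metis
qed

lemma linear_forest_graph: "linear_forest F \<Longrightarrow> graph F"
  unfolding linear_forest_def by blast

lemma linear_forest_delete_edge:
  assumes "linear_forest F" "e \<in> edges F"
  shows "linear_forest (verts F, edges F - {e})"
proof -
  obtain P where P: "disjoint_paths P"
    and V: "verts F = (\<Union>p\<in>P. set p)" and E: "edges F = (\<Union>p\<in>P. path_edges p)"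
    using assms(1) by (rule linear_forestE)
  obtain p where p: "p \<in> P" "e \<in> path_edges p"
    using assms(2) E by auto
  obtain xs ys where p_split: "p = xs @ ys" "xs \<noteq> []" "ys \<noteq> []" and e: "e = {last xs, hd ys}"
    using path_edges_split[OF p(2)] by blast
  have "distinct p"
    using P p unfolding disjoint_paths_def by blast
  then have xs_ys: "distinct xs" "distinct ys" "set xs \<inter> set ys = {}"
    using p_split by auto
  have others: "set q \<inter> set p = {}" if "q \<in> P - {p}" for q
    using P p that unfolding disjoint_paths_def pairwise_def by blast
  define P' where "P' = insert xs (insert ys (P - {p}))"
  have "finite (verts F)"
    using linear_forest_graph[OF assms(1)] unfolding graph_def by simp
  moreover have "disjoint_paths P'"
    using P xs_ys p_split others unfolding P'_def disjoint_paths_def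
    by (auto simp: pairwise_insert intro: pairwise_subset)
  moreover have "verts F = (\<Union>q\<in>P'. set q)"
    using V p p_split unfolding P'_def by auto
  moreover have "edges F - {e} = (\<Union>q\<in>P'. path_edges q)"
  proof -
    have ends: "last xs \<in> set xs" "hd ys \<in> set ys"
      using p_split by simp_all
    have "\<not> e \<subseteq> set q" if "q \<in> P'" for q
      using that ends xs_ys(3) others[of q] unfolding P'_def e p_split(1) by (auto simp: disjoint_iff)
    then have not_e: "e \<notin> path_edges q" if "q \<in> P'" for q
      using that path_edges_subset_set by blast
    have "edges F = path_edges xs \<union> insert e (path_edges ys) \<union> (\<Union>q\<in>P - {p}. path_edges q)"
      using E p path_edges_append[OF p_split(2,3)] unfolding p_split(1) e by blast
    then show ?thesis
      using not_e unfolding P'_def by blast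
  qed
  ultimately show ?thesis
    by (rule linear_forestI)
qed

lemma linear_forest_edge_subset:
  assumes "linear_forest F" "E \<subseteq> edges F"
  shows "linear_forest (verts F, E)"
proof -
  have remove: "linear_forest (verts F, edges F - D)" if "finite D" "D \<subseteq> edges F" for D
    using that
  proof (induction D rule: finite_induct)
    case empty
    then show ?case using assms(1) by (simp add: verts_def edges_def)
  next
    case (insert e D)
    then have "linear_forest (verts F, edges F - D)" "e \<in> edges (verts F, edges F - D)"
      by auto
    from linear_forest_delete_edge[OF this] have "linear_forest (verts F, edges F - D - {e})"
      by (simp only: verts_pair edges_pair)
    moreover have "edges F - D - {e} = edges F - insert e D"
      by blast
    ultimately show ?case
      by metis
  qed
  have "finite (edges F - E)"
    using graph_finite_edges[OF linear_forest_graph[OF assms(1)]] by simp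
  moreover have "edges F - (edges F - E) = E"
    using assms(2) by blast
  ultimately show ?thesis
    using remove[of "edges F - E"] by simp
qed

lemma linear_forest_add_edge:
  assumes "linear_forest F" "u \<noteq> v" "\<forall>e\<in>edges F. u \<notin> e \<and> v \<notin> e"
  shows "linear_forest (verts F \<union> {u, v}, insert {u, v} (edges F))"
proof -
  obtain P where P: "disjoint_paths P"
    and V: "verts F = (\<Union>p\<in>P. set p)" and E: "edges F = (\<Union>p\<in>P. path_edges p)"
    using assms(1) by (rule linear_forestE)
  have singleton: "q = [w]" if q: "q \<in> P" "w \<in> set q" "w \<in> {u, v}" for q w
  proof (rule path_edges_isolated_vertex[OF q(2)])
    have "path_edges q \<subseteq> edges F"
      unfolding E using q(1) by blast
    then show "\<forall>e\<in>path_edges q. w \<notin> e"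
      using q(3) assms(3) by blast
  qed
  then have avoid: "set q \<inter> {u, v} = {}" if "q \<in> P - {[u], [v]}" for q
    using that by blast
  define P' where "P' = insert [u, v] (P - {[u], [v]})"
  have "finite (verts F \<union> {u, v})"
    using linear_forest_graph[OF assms(1)] unfolding graph_def by simp
  moreover have "disjoint_paths P'"
    using P avoid assms(2) unfolding P'_def disjoint_paths_def
    by (auto simp: pairwise_insert intro: pairwise_subset)
  moreover have "verts F \<union> {u, v} = (\<Union>q\<in>P'. set q)"
    using V unfolding P'_def by auto
  moreover have "insert {u, v} (edges F) = (\<Union>q\<in>P'. path_edges q)"
    using E unfolding P'_def by auto
  ultimately show ?thesis
    by (rule linear_forestI)
qed

definition linear_forest_partition :: "nat \<Rightarrow> (nat \<Rightarrow> 'a graph) \<Rightarrow> 'a set set \<Rightarrow> bool" where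
  "linear_forest_partition k F E \<longleftrightarrow>
     (\<forall>i<k. linear_forest (F i)) \<and> disjoint_family_on (\<lambda>i. edges (F i)) {..<k} \<and>
     (\<Union>i<k. edges (F i)) = E"

lemma linear_forest_partition_of_cover:
  assumes "\<forall>i<k. linear_forest (F i)" "covers_edges k F G"
  shows "\<exists>F'. linear_forest_partition k F' (edges G)"
proof -
  define A where "A i = edges (F i) \<inter> edges G" for i
  define F' where "F' i = (verts (F i), disjointed A i)" for i
  have edges_F': "edges (F' i) = disjointed A i" for i
    unfolding F'_def by simp
  have "linear_forest (F' i)" if "i < k" for i
    using linear_forest_edge_subset[of "F i" "disjointed A i"] assms(1) that disjointed_subset[of A i]
    unfolding F'_def A_def by auto
  moreover have "disjoint_family_on (\<lambda>i. edges (F' i)) {..<k}"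
    using disjoint_family_disjointed[of A] unfolding edges_F' disjoint_family_on_def by blast
  moreover have "(\<Union>i<k. edges (F' i)) = edges G"
  proof -
    have "(\<Union>i<k. edges (F' i)) = (\<Union>i<k. A i)"
      using finite_UN_disjointed_eq[of A k] unfolding edges_F' by (simp add: atLeast0LessThan)
    also have "\<dots> = edges G"
      using assms(2) unfolding A_def covers_edges_def by auto
    finally show ?thesis .
  qed
  ultimately show ?thesis
    unfolding linear_forest_partition_def by blast
qed

lemma disjoint_family_avoids_small_set:
  assumes "disjoint_family_on A {..<k}" "finite T" "card T < k"
  shows "\<exists>i<k. A i \<inter> T = {}"
proof (rule ccontr)
  assume "\<not> ?thesis"
  then have meets: "A i \<inter> T \<noteq> {}" if "i < k" for i
    using that by blast
  have "k = (\<Sum>i<k. 1)"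
    by simp
  also have "\<dots> \<le> (\<Sum>i<k. card (A i \<inter> T))"
    using meets assms(2) by (intro sum_mono) (simp add: Suc_leI card_gt_0_iff)
  also have "\<dots> = card (\<Union>i<k. A i \<inter> T)"
    using assms(1,2) by (intro card_UN_disjoint[symmetric]) (auto simp: disjoint_family_on_def)
  also have "\<dots> \<le> card T"
    using assms(2) by (intro card_mono) auto
  finally show False
    using assms(3) by simp
qed

lemma linear_forest_partition_insert:
  assumes part: "linear_forest_partition k F E" and "u \<noteq> v" "finite E"
    and "card {e \<in> E. u \<in> e \<or> v \<in> e} < k"
  shows "\<exists>F'. linear_forest_partition k F' (insert {u, v} E)"
proof (cases "{u, v} \<in> E")
  case True
  then show ?thesis
    using part by (auto simp: insert_absorb)
next
  case False
  from part have lf: "\<forall>i<k. linear_forest (F i)"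
    and disjoint: "disjoint_family_on (\<lambda>i. edges (F i)) {..<k}"
    and E: "(\<Union>i<k. edges (F i)) = E"
    unfolding linear_forest_partition_def by simp_all
  have "finite {e \<in> E. u \<in> e \<or> v \<in> e}"
    using assms(3) by simp
  then obtain i where i: "i < k" "edges (F i) \<inter> {e \<in> E. u \<in> e \<or> v \<in> e} = {}"
    using disjoint_family_avoids_small_set[OF disjoint] assms(4) by blast
  have free: "\<forall>e\<in>edges (F i). u \<notin> e \<and> v \<notin> e"
    using i E by blast
  have new: "{u, v} \<notin> edges (F j)" if "j < k" for j
    using False E that by blast
  define F' where "F' = F(i := (verts (F i) \<union> {u, v}, insert {u, v} (edges (F i))))"
  have "\<forall>j<k. linear_forest (F' j)"
    using lf linear_forest_add_edge[OF _ \<open>u \<noteq> v\<close> free] i(1) unfolding F'_def by simp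
  moreover have "disjoint_family_on (\<lambda>j. edges (F' j)) {..<k}"
    using disjoint new i(1) unfolding F'_def disjoint_family_on_def by auto
  moreover have "(\<Union>j<k. edges (F' j)) = insert {u, v} E"
    using i(1) unfolding E[symmetric] F'_def by (auto split: if_splits)
  ultimately show ?thesis
    unfolding linear_forest_partition_def by blast
qed

lemma linear_forest_partition_union:
  assumes "linear_forest_partition k F E" "finite (E \<union> E')"
    and "\<forall>e\<in>E'. \<exists>u v. u \<noteq> v \<and> e = {u, v} \<and> card {x \<in> E \<union> E'. u \<in> x \<or> v \<in> x} < k"
  shows "\<exists>F'. linear_forest_partition k F' (E \<union> E')"
proof -
  have "\<exists>F'. linear_forest_partition k F' (E \<union> S)" if "finite S" "S \<subseteq> E'" for S
    using that
  proof (induction S rule: finite_subset_induct')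
    case empty
    then show ?case
      using assms(1) by auto
  next
    case (insert e S)
    then obtain F' where part: "linear_forest_partition k F' (E \<union> S)"
      by blast
    obtain u v where uv: "u \<noteq> v" "e = {u, v}"
      and small: "card {x \<in> E \<union> E'. u \<in> x \<or> v \<in> x} < k"
      using assms(3) insert.hyps(2) by blast
    have fin: "finite (E \<union> S)"
      using assms(2) insert.hyps(3) by (auto intro: finite_subset)
    have "card {x \<in> E \<union> S. u \<in> x \<or> v \<in> x} \<le> card {x \<in> E \<union> E'. u \<in> x \<or> v \<in> x}"
      using assms(2) insert.hyps(3) by (intro card_mono) auto
    then have "card {x \<in> E \<union> S. u \<in> x \<or> v \<in> x} < k"
      using small by linarith
    then have "\<exists>F'. linear_forest_partition k F' (insert {u, v} (E \<union> S))"
      by (rule linear_forest_partition_insert[OF part uv(1) fin])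
    then show ?case
      using uv by simp
  qed
  then show ?thesis
    using assms(2) by blast
qed

lemma linear_forest_partition_covers:
  "linear_forest_partition k F (edges G) \<Longrightarrow> (\<forall>i<k. linear_forest (F i)) \<and> covers_edges k F G"
  unfolding linear_forest_partition_def covers_edges_def by auto

lemma degree_graph_union_le: "degree (graph_union G H) v \<le> degree G v + degree H v"
proof -
  have "{e \<in> edges (graph_union G H). v \<in> e} = {e \<in> edges G. v \<in> e} \<union> {e \<in> edges H. v \<in> e}"
    unfolding graph_union_def by auto
  then show ?thesis
    unfolding degree_def by (simp only: card_Un_le)
qed

lemma card_edges_incident_le: "card {e \<in> edges G. u \<in> e \<or> v \<in> e} \<le> degree G u + degree G v"
proof -
  have "{e \<in> edges G. u \<in> e \<or> v \<in> e} = {e \<in> edges G. u \<in> e} \<union> {e \<in> edges G. v \<in> e}"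
    by blast
  then show ?thesis
    unfolding degree_def by (simp only: card_Un_le)
qed

lemma card_edges_at_endpoints_le:
  assumes "graph H" "\<forall>v\<in>verts H. degree H v \<le> d \<and> degree G v \<le> d" "e \<in> edges H"
  obtains u v where "u \<noteq> v" "e = {u, v}" "card {x \<in> edges G \<union> edges H. u \<in> x \<or> v \<in> x} \<le> 4 * d"
proof -
  obtain u v where uv: "u \<noteq> v" "e = {u, v}" "u \<in> verts H" "v \<in> verts H"
    using assms(1,3) unfolding graph_def by meson
  have "edges G \<union> edges H = edges (graph_union G H)"
    unfolding graph_union_def by simp
  then have "card {x \<in> edges G \<union> edges H. u \<in> x \<or> v \<in> x}
      \<le> degree (graph_union G H) u + degree (graph_union G H) v"
    using card_edges_incident_le[of "graph_union G H" u v] by simp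
  also have "\<dots> \<le> 4 * d"
    using degree_graph_union_le[of G H u] degree_graph_union_le[of G H v]
      assms(2)[rule_format, OF uv(3)] assms(2)[rule_format, OF uv(4)]
    by linarith
  finally show thesis
    using that uv(1,2) by blast
qed

theorem lemma3p1:
  fixes G H :: "'a graph" and d k :: nat and F :: "nat \<Rightarrow> 'a graph"
  assumes "graph G" and "graph H"
    and "\<forall>v\<in>verts H. degree H v \<le> d \<and> degree G v \<le> d"
    and "k \<ge> 4 * d + 1"
    and "\<forall>i<k. linear_forest (F i)"
    and "covers_edges k F G"
  shows "\<exists>F' :: nat \<Rightarrow> 'a graph. (\<forall>i<k. linear_forest (F' i)) \<and>
           covers_edges k F' (graph_union G H)"
proof -
  obtain F0 where F0: "linear_forest_partition k F0 (edges G)"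
    using linear_forest_partition_of_cover assms(5,6) by blast
  have fin: "finite (edges G \<union> edges H)"
    using graph_finite_edges assms(1,2) by blast
  have small: "\<forall>e\<in>edges H. \<exists>u v. u \<noteq> v \<and> e = {u, v} \<and>
      card {x \<in> edges G \<union> edges H. u \<in> x \<or> v \<in> x} < k"
  proof
    fix e
    assume "e \<in> edges H"
    then obtain u v where "u \<noteq> v" "e = {u, v}"
      and "card {x \<in> edges G \<union> edges H. u \<in> x \<or> v \<in> x} \<le> 4 * d"
      by (rule card_edges_at_endpoints_le[OF assms(2,3)])
    with assms(4) show "\<exists>u v. u \<noteq> v \<and> e = {u, v} \<and>
        card {x \<in> edges G \<union> edges H. u \<in> x \<or> v \<in> x} < k"
      by (intro exI[of _ u] exI[of _ v]) simp
  qed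
  have "edges (graph_union G H) = edges G \<union> edges H"
    unfolding graph_union_def by simp
  then obtain F' where "linear_forest_partition k F' (edges (graph_union G H))"
    using linear_forest_partition_union[OF F0 fin small] by auto
  then show ?thesis
    using linear_forest_partition_covers by blast
qed

end
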